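(* Let $(Q,\cdot,e)$ be a double Ward quasigroup and let $x\,\bar{\cdot}\,y=y\cdot x$ be the dual operation. Then $(Q,\bar{\cdot},e)$ is a double Ward quasigroup.
   Context: A quasigroup is a magma in which $ax=b$ and $ya=b$ have unique solutions for all $a,b$. A double Ward quasigroup $(Q,\cdot,e)$ is a quasigroup with an element $e$ such that $(ee\cdot xz)(ey\cdot z)=xy$ for all $x,y,z\in Q$. *)

theory Defs
  imports Main
begin

definition quasigroup :: "'a set \<Rightarrow> ('a \<Rightarrow> 'a \<Rightarrow> 'a) \<Rightarrow> bool" where
  "quasigroup Q f \<longleftrightarrow>
     (\<forall>x\<in>Q. \<forall>y\<in>Q. f x y \<in> Q) \<and>
     (\<forall>a\<in>Q. \<forall>b\<in>Q. \<exists>!x. x \<in> Q \<and> f a x = b) \<and>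
     (\<forall>a\<in>Q. \<forall>b\<in>Q. \<exists>!y. y \<in> Q \<and> f y a = b)"

definition double_ward_quasigroup :: "'a set \<Rightarrow> ('a \<Rightarrow> 'a \<Rightarrow> 'a) \<Rightarrow> 'a \<Rightarrow> bool" where
  "double_ward_quasigroup Q f e \<longleftrightarrow>
     quasigroup Q f \<and> e \<in> Q \<and>
     (\<forall>x\<in>Q. \<forall>y\<in>Q. \<forall>z\<in>Q. f (f (f e e) (f x z)) (f (f e y) z) = f x y)"

end

(* In a double Ward quasigroup e is idempotent, x \<mapsto> e x = x e is an involutive
   anti-automorphism, and the Ward identity simplifies to (e(xz))(yz) = x(ey).
   Taking x = e there gives semisymmetry z(yz) = y, and the dual Ward identity
   is an instance of the same simplified identity once both factors of its left
   side are rewritten with the anti-automorphism. (Model: x y = x\<inverse> y\<inverse> in a group,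
   whose dual is the same construction in the opposite group.) *)
theory Submission
  imports Defs
begin

lemma quasigroup_dual: "quasigroup Q f \<Longrightarrow> quasigroup Q (\<lambda>x y. f y x)"
  unfolding quasigroup_def by (simp add: conj_commute)

locale quasigroup_on =
  fixes Q :: "'a set" and mult :: "'a \<Rightarrow> 'a \<Rightarrow> 'a" (infixl "\<cdot>" 70)
  assumes quasigroup: "quasigroup Q (\<cdot>)"
begin

lemma closed: "x \<in> Q \<Longrightarrow> y \<in> Q \<Longrightarrow> x \<cdot> y \<in> Q"
  using quasigroup by (simp add: quasigroup_def)

lemma left_division_unique: "a \<in> Q \<Longrightarrow> b \<in> Q \<Longrightarrow> \<exists>!x. x \<in> Q \<and> a \<cdot> x = b"
  using quasigroup by (simp add: quasigroup_def)

lemma right_division_unique: "a \<in> Q \<Longrightarrow> b \<in> Q \<Longrightarrow> \<exists>!x. x \<in> Q \<and> x \<cdot> a = b"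
  using quasigroup by (simp add: quasigroup_def)

lemma right_cancel: "a \<in> Q \<Longrightarrow> x \<in> Q \<Longrightarrow> y \<in> Q \<Longrightarrow> x \<cdot> a = y \<cdot> a \<Longrightarrow> x = y"
  using right_division_unique[of a "y \<cdot> a"] closed by blast

lemma left_divisible:
  assumes "a \<in> Q" "b \<in> Q"
  obtains x where "x \<in> Q" "a \<cdot> x = b"
  using left_division_unique[OF assms] by blast

lemma right_divisible:
  assumes "a \<in> Q" "b \<in> Q"
  obtains x where "x \<in> Q" "x \<cdot> a = b"
  using right_division_unique[OF assms] by blast

lemma translation_inverse_sym:
  assumes "a \<in> Q" "b \<in> Q" and inv: "\<And>x. x \<in> Q \<Longrightarrow> (a \<cdot> x) \<cdot> b = x" and "x \<in> Q"
  shows "a \<cdot> (x \<cdot> b) = x"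
proof -
  obtain v where "v \<in> Q" "a \<cdot> v = x"
    using left_divisible assms by blast
  then show ?thesis
    using inv by metis
qed

end

locale double_ward = quasigroup_on +
  fixes e :: 'a
  assumes double_ward: "double_ward_quasigroup Q (\<cdot>) e"
begin

lemma unit_closed: "e \<in> Q"
  using double_ward by (simp add: double_ward_quasigroup_def)

lemma ward: "x \<in> Q \<Longrightarrow> y \<in> Q \<Longrightarrow> z \<in> Q \<Longrightarrow> ((e \<cdot> e) \<cdot> (x \<cdot> z)) \<cdot> ((e \<cdot> y) \<cdot> z) = x \<cdot> y"
  using double_ward by (simp add: double_ward_quasigroup_def)

lemma ward_square_const:
  assumes "w \<in> Q" "y \<in> Q"
  shows "((e \<cdot> e) \<cdot> w) \<cdot> w = (e \<cdot> y) \<cdot> y"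
proof -
  obtain z where "z \<in> Q" "(e \<cdot> y) \<cdot> z = w"
    using left_divisible assms closed unit_closed by metis
  then show ?thesis
    using ward[of "e \<cdot> y" y z] assms closed unit_closed by simp
qed

lemma unit_idem: "e \<cdot> e = e"
proof -
  have "((e \<cdot> e) \<cdot> e) \<cdot> e = (e \<cdot> e) \<cdot> e"
    using ward_square_const unit_closed by blast
  then have "(e \<cdot> e) \<cdot> e = e \<cdot> e"
    using right_cancel closed unit_closed by blast
  then show ?thesis
    using right_cancel closed unit_closed by blast
qed

lemma ward_unit: "x \<in> Q \<Longrightarrow> y \<in> Q \<Longrightarrow> z \<in> Q \<Longrightarrow> (e \<cdot> (x \<cdot> z)) \<cdot> ((e \<cdot> y) \<cdot> z) = x \<cdot> y"
  using ward unit_idem by simp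

lemma unit_square: "y \<in> Q \<Longrightarrow> (e \<cdot> y) \<cdot> y = e"
  using ward_square_const[of e y] unit_closed unit_idem by simp

lemma unit_left_right: "w \<in> Q \<Longrightarrow> (e \<cdot> w) \<cdot> e = w"
proof -
  assume "w \<in> Q"
  then obtain x where "x \<in> Q" "x \<cdot> e = w"
    using right_divisible unit_closed by blast
  then show ?thesis
    using ward_unit[of x e e] unit_closed unit_idem by simp
qed

lemma unit_right_left: "w \<in> Q \<Longrightarrow> e \<cdot> (w \<cdot> e) = w"
  using translation_inverse_sym unit_left_right unit_closed by blast

lemma right_unit_inverse: "x \<in> Q \<Longrightarrow> x \<cdot> (x \<cdot> e) = e"
  using unit_square[of "x \<cdot> e"] unit_right_left closed unit_closed by simp

lemma unit_comm: "x \<in> Q \<Longrightarrow> e \<cdot> x = x \<cdot> e"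
  using ward_unit[of x e "x \<cdot> e"] right_unit_inverse unit_right_left unit_idem closed unit_closed
  by simp

lemma unit_involutive: "x \<in> Q \<Longrightarrow> e \<cdot> (e \<cdot> x) = x"
  using unit_right_left[of x] unit_comm[of x] by simp

lemma ward_simplified: "x \<in> Q \<Longrightarrow> y \<in> Q \<Longrightarrow> z \<in> Q \<Longrightarrow> (e \<cdot> (x \<cdot> z)) \<cdot> (y \<cdot> z) = x \<cdot> (e \<cdot> y)"
  using ward_unit[of x "e \<cdot> y" z] unit_involutive closed unit_closed by simp

lemma semisymmetric: "x \<in> Q \<Longrightarrow> y \<in> Q \<Longrightarrow> x \<cdot> (y \<cdot> x) = y"
  using ward_simplified[of e y x] unit_involutive unit_closed by simp

lemma semisymmetric': "x \<in> Q \<Longrightarrow> y \<in> Q \<Longrightarrow> (x \<cdot> y) \<cdot> x = y"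
  using semisymmetric[of "x \<cdot> y" y] semisymmetric[of y x] closed by simp

lemma unit_anti_hom:
  assumes "x \<in> Q" "w \<in> Q"
  shows "(e \<cdot> x) \<cdot> (e \<cdot> w) = e \<cdot> (w \<cdot> x)"
proof -
  have "(e \<cdot> w) \<cdot> (e \<cdot> (w \<cdot> x)) = e \<cdot> x"
    using ward_simplified[of x e "w \<cdot> x"] semisymmetric unit_comm[of x, symmetric] unit_idem
      assms closed unit_closed
    by simp
  then show ?thesis
    using semisymmetric'[of "e \<cdot> w" "e \<cdot> (w \<cdot> x)"] assms closed unit_closed by simp
qed

lemma dual_ward:
  assumes "x \<in> Q" "y \<in> Q" "z \<in> Q"
  shows "(z \<cdot> (y \<cdot> e)) \<cdot> ((z \<cdot> x) \<cdot> (e \<cdot> e)) = y \<cdot> x"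
proof -
  have "z \<cdot> (y \<cdot> e) = e \<cdot> (y \<cdot> (e \<cdot> z))"
    using unit_anti_hom[of "e \<cdot> z" y] unit_involutive unit_comm[of y, symmetric] assms closed unit_closed
    by simp
  moreover have "(z \<cdot> x) \<cdot> (e \<cdot> e) = (e \<cdot> x) \<cdot> (e \<cdot> z)"
    using unit_anti_hom[of x z] unit_comm[of "z \<cdot> x", symmetric] unit_idem assms closed
    by simp
  ultimately show ?thesis
    using ward_simplified[of y "e \<cdot> x" "e \<cdot> z"] unit_involutive assms closed unit_closed by simp
qed

end

theorem theorem4p9:
  assumes "double_ward_quasigroup Q f e"
  shows "double_ward_quasigroup Q (\<lambda>x y. f y x) e"
proof -
  interpret double_ward Q f e
    using assms by unfold_locales (simp_all add: double_ward_quasigroup_def)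
  show ?thesis
    unfolding double_ward_quasigroup_def
    using quasigroup_dual[OF quasigroup] unit_closed dual_ward by blast
qed

end
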